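(* Consider the one-stage adversarial networked control (ANC) game described in the context, and suppose that for every $x\in\mathbb{R}^n$ and every $a\in\mathcal{A}$ the functions $u\mapsto\Sigma(F(x,0),u,a)$ and $u\mapsto\Sigma(F(x,u),u,a)$ are continuous, coercive and convex functions $\mathbb{R}^m\to\mathbb{R}$. Then for every initial pair $(x,s)\in\mathbb{R}^n\times\mathcal{F}$ the game has a finite value, $-\infty<J_1=J_2<\infty$, and the game has a (possibly non-unique) saddle point $(u^*,p^* )$. Furthermore, for every $x$ there exists a compact set $U(x)\subset\mathbb{R}^m$ which contains the controller's optimal response $u^*=u^*(x,s)$ and is such that \[ J_1=\inf_{u\in U(x)}\sup_{p\in\mathcal{S}_{N-1}}p'h^{x,s}(u)=\sup_{p\in\mathcal{S}_{N-1}}\inf_{u\in U(x)}p'h^{x,s}(u)=J_2 . \]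
   Context: Setting (one-stage ANC game). Let $\mathcal{F}=\{1,\dots,|\mathcal{F}|\}$ be a finite set of transmission regimes and $\mathcal{A}=\{1,\dots,N\}$ a finite set of jammer actions. For each $a\in\mathcal{A}$ let $P(a)$ be an $|\mathcal{F}|\times|\mathcal{F}|$ row-stochastic matrix, and let $q=(q_1,\dots,q_{|\mathcal{F}|})'\in[0,1]^{|\mathcal{F}|}$. Let $F:\mathbb{R}^n\times\mathbb{R}^m\to\mathbb{R}^n$, $\sigma^0:\mathbb{R}^n\times\mathbb{R}^m\to\mathbb{R}$, $\sigma^1:\mathbb{R}^n\to\mathbb{R}$ and $g^0:\mathcal{A}\times\mathcal{F}\to\mathbb{R}$ be given. For a given plant state $x\in\mathbb{R}^n$ and link regime $s\in\mathcal{F}$, the controller chooses $u\in\mathbb{R}^m$ and the jammer chooses a probability vector $p$ in the unit simplex $\mathcal{S}_{N-1}=\{p\in\mathbb{R}^N:p_j\ge0,\sum_jp_j=1\}$; an action $a\in\mathcal{A}$ is drawn according to $p$, then a new regime $s^+$ is drawn with $\mathrm{Pr}(s^+=i)=P_{si}(a)$, then $b\in\{0,1\}$ is drawn with $\mathrm{Pr}(b=1\mid s^+)=q_{s^+}$, and $x^+=F(x,bu)$. The payoff (cost to the controller, reward to the jammer) is $\Sigma(x^+,u,a)=\sigma^0(x,u)+\sigma^1(x^+)-g^0(a,s)$. Its expectation is $\mathbb{E}^{u,p}\Sigma(x^+,u,a)=p'h^{x,s}(u)$, where $h^{x,s}:\mathbb{R}^m\to\mathbb{R}^N$ has components $h^{x,s}_i(u)=(P(i)q)_s\,\Sigma(F(x,u),u,i)+(1-(P(i)q)_s)\,\Sigma(F(x,0),u,i)$,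 with $(P(i)q)_s$ the $s$-th entry of the vector $P(i)q$. The upper and lower values are $J_1=\inf_{u\in\mathbb{R}^m}\sup_{p\in\mathcal{S}_{N-1}}p'h^{x,s}(u)$ and $J_2=\sup_{p\in\mathcal{S}_{N-1}}\inf_{u\in\mathbb{R}^m}p'h^{x,s}(u)$. A saddle point is a pair $(u^*,p^* )\in\mathbb{R}^m\times\mathcal{S}_{N-1}$ with $p'h^{x,s}(u^* )\le(p^* )'h^{x,s}(u^* )\le(p^* )'h^{x,s}(u)$ for all $u\in\mathbb{R}^m$, $p\in\mathcal{S}_{N-1}$ (so that $(p^* )'h^{x,s}(u^* )=J_1=J_2$); $u^*$ is the controller's optimal response. A function $h:\mathbb{R}^m\to\mathbb{R}$ is coercive if there is $\eta:\mathbb{R}_+\to\mathbb{R}$ with $\lim_{y\to+\infty}\eta(y)=+\infty$ and $h(u)\ge\eta(\|u\|)$ for all $u$. *)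

theory Defs
  imports "HOL-Analysis.Analysis"
begin

text \<open>Transmission regimes are the elements of a finite type 'f, jammer actions the
elements of a finite type 'a (so N = CARD('a)). P a is the matrix (P a s i)_{s,i}.\<close>

definition row_stochastic :: "('f::finite \<Rightarrow> 'f \<Rightarrow> real) \<Rightarrow> bool" where
  "row_stochastic M \<longleftrightarrow> (\<forall>s i. 0 \<le> M s i) \<and> (\<forall>s. (\<Sum>i\<in>UNIV. M s i) = 1)"

definition prob_simplex :: "('a::finite \<Rightarrow> real) set" where
  "prob_simplex = {p. (\<forall>j. 0 \<le> p j) \<and> (\<Sum>j\<in>UNIV. p j) = 1}"

definition coercive :: "('b::real_normed_vector \<Rightarrow> real) \<Rightarrow> bool" where
  "coercive h \<longleftrightarrow> (\<exists>\<eta>::real \<Rightarrow> real. filterlim \<eta> at_top at_top \<and> (\<forall>u. \<eta> (norm u) \<le> h u))"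

text \<open>Payoff Sigma(x+,u,a) = sigma0(x,u) + sigma1(x+) - g0(a,s), for current state x and regime s.\<close>
definition Payoff ::
  "('x \<Rightarrow> 'u \<Rightarrow> real) \<Rightarrow> ('x \<Rightarrow> real) \<Rightarrow> ('a \<Rightarrow> 'f \<Rightarrow> real)
   \<Rightarrow> 'x \<Rightarrow> 'f \<Rightarrow> 'x \<Rightarrow> 'u \<Rightarrow> 'a \<Rightarrow> real" where
  "Payoff \<sigma>0 \<sigma>1 g0 x s xp u a = \<sigma>0 x u + \<sigma>1 xp - g0 a s"

definition Pq :: "('a \<Rightarrow> 'f \<Rightarrow> 'f \<Rightarrow> real) \<Rightarrow> ('f::finite \<Rightarrow> real) \<Rightarrow> 'a \<Rightarrow> 'f \<Rightarrow> real" where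
  "Pq P q a s = (\<Sum>i\<in>UNIV. P a s i * q i)"

definition hvec ::
  "('x \<Rightarrow> 'u::zero \<Rightarrow> 'x) \<Rightarrow> ('x \<Rightarrow> 'u \<Rightarrow> real) \<Rightarrow> ('x \<Rightarrow> real) \<Rightarrow> ('a \<Rightarrow> 'f \<Rightarrow> real)
   \<Rightarrow> ('a \<Rightarrow> 'f \<Rightarrow> 'f \<Rightarrow> real) \<Rightarrow> ('f::finite \<Rightarrow> real) \<Rightarrow> 'x \<Rightarrow> 'f \<Rightarrow> 'u \<Rightarrow> 'a \<Rightarrow> real" where
  "hvec F \<sigma>0 \<sigma>1 g0 P q x s u i =
     Pq P q i s * Payoff \<sigma>0 \<sigma>1 g0 x s (F x u) u i
     + (1 - Pq P q i s) * Payoff \<sigma>0 \<sigma>1 g0 x s (F x 0) u i"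

definition expected :: "('a::finite \<Rightarrow> real) \<Rightarrow> ('a \<Rightarrow> real) \<Rightarrow> real" where
  "expected p h = (\<Sum>j\<in>UNIV. p j * h j)"

definition upper_value :: "('u \<Rightarrow> 'a::finite \<Rightarrow> real) \<Rightarrow> 'u set \<Rightarrow> ereal" where
  "upper_value h U = (INF u\<in>U. SUP p\<in>prob_simplex. ereal (expected p (h u)))"

definition lower_value :: "('u \<Rightarrow> 'a::finite \<Rightarrow> real) \<Rightarrow> 'u set \<Rightarrow> ereal" where
  "lower_value h U = (SUP p\<in>prob_simplex. INF u\<in>U. ereal (expected p (h u)))"

definition saddle_point :: "('u \<Rightarrow> 'a::finite \<Rightarrow> real) \<Rightarrow> 'u \<Rightarrow> ('a \<Rightarrow> real) \<Rightarrow> bool" where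
  "saddle_point h us ps \<longleftrightarrow> ps \<in> prob_simplex \<and>
     (\<forall>u. \<forall>p\<in>prob_simplex. expected p (h us) \<le> expected ps (h us) \<and> expected ps (h us) \<le> expected ps (h u))"

end

theory Submission imports Defs begin

text \<open>Each pure jammer action yields a convex combination of two continuous, convex, coercive
  functions of the control, which is again of this kind. The worst-case cost
  \<open>\<phi> u = max\<^sub>a h\<^sub>a u\<close> is then continuous and coercive, so it attains its minimum \<open>v\<close> at some
  \<open>u\<^sup>*\<close>. The convex set \<open>{z. \<exists>u. h u \<le> z}\<close> misses the open orthant \<open>{z. z < v}\<close>; a separating
  hyperplane has a nonnegative normal, which normalised is a mixed strategy \<open>p\<^sup>*\<close> with
  \<open>p\<^sup>*' h u \<ge> v\<close> for all \<open>u\<close>, so \<open>(u\<^sup>*, p\<^sup>*)\<close> is a saddle point. Saddle points lie in a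
  sublevel set of a coercive component, which gives the compact set \<open>U(x)\<close>.\<close>

lemma expected_le_const:
  assumes "p \<in> prob_simplex" "\<And>i. y i \<le> c"
  shows "expected p y \<le> c"
proof -
  have "expected p y \<le> (\<Sum>j\<in>UNIV. p j * c)" unfolding expected_def
    using assms by (intro sum_mono mult_left_mono) (auto simp: prob_simplex_def)
  also have "\<dots> = c" using assms(1) by (simp add: prob_simplex_def sum_distrib_right[symmetric])
  finally show ?thesis .
qed

lemma point_mass_in_prob_simplex: "(\<lambda>j. if j = i then 1 else 0) \<in> prob_simplex"
  by (simp add: prob_simplex_def)

lemma expected_point_mass: "expected (\<lambda>j. if j = i then 1 else 0) y = y i"
  unfolding expected_def by (subst sum.cong[OF refl, of _ _ "\<lambda>j. if j = i then y j else 0"]) auto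

lemma Pq_bounds:
  assumes "row_stochastic (P a)" "\<And>i. 0 \<le> q i \<and> q i \<le> 1"
  shows "0 \<le> Pq P q a s \<and> Pq P q a s \<le> 1"
proof -
  have "0 \<le> Pq P q a s" unfolding Pq_def using assms
    by (intro sum_nonneg mult_nonneg_nonneg) (auto simp: row_stochastic_def)
  moreover have "Pq P q a s \<le> (\<Sum>k\<in>UNIV. P a s k)" unfolding Pq_def using assms
    by (intro sum_mono) (auto simp: row_stochastic_def intro: mult_left_le)
  ultimately show ?thesis using assms(1) by (simp add: row_stochastic_def)
qed

lemma coercive_bounded_sublevel:
  assumes "coercive f"
  shows "bounded {u. f u \<le> c}"
proof -
  obtain \<eta> where \<eta>: "filterlim \<eta> at_top at_top" "\<And>u. \<eta> (norm u) \<le> f u"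
    using assms unfolding coercive_def by blast
  obtain N where N: "\<And>y. y \<ge> N \<Longrightarrow> c + 1 \<le> \<eta> y"
    using \<eta>(1) unfolding filterlim_at_top eventually_at_top_linorder by blast
  have "{u. f u \<le> c} \<subseteq> cball 0 N"
  proof
    fix u assume "u \<in> {u. f u \<le> c}"
    then have "norm u \<le> N" using N[of "norm u"] \<eta>(2)[of u] by force
    then show "u \<in> cball 0 N" by simp
  qed
  then show ?thesis using bounded_subset by blast
qed

lemma coercive_mono:
  assumes "coercive f" "\<And>u. f u \<le> g u"
  shows "coercive g"
  using assms unfolding coercive_def by (meson order_trans)

lemma coercive_convex_combination:
  assumes "coercive A" "coercive B" "0 \<le> w" "w \<le> 1"
  shows "coercive (\<lambda>u. w * A u + (1 - w) * B u)"
proof -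
  obtain \<eta>A where A: "filterlim \<eta>A at_top at_top" "\<And>u. \<eta>A (norm u) \<le> A u"
    using assms(1) unfolding coercive_def by blast
  obtain \<eta>B where B: "filterlim \<eta>B at_top at_top" "\<And>u. \<eta>B (norm u) \<le> B u"
    using assms(2) unfolding coercive_def by blast
  have "filterlim (\<lambda>y. min (\<eta>A y) (\<eta>B y)) at_top at_top"
    using A(1) B(1) unfolding filterlim_at_top by (simp add: eventually_conj_iff)
  moreover have "min (\<eta>A (norm u)) (\<eta>B (norm u)) \<le> w * A u + (1 - w) * B u" for u
  proof -
    have "min (\<eta>A (norm u)) (\<eta>B (norm u)) = w * min (\<eta>A (norm u)) (\<eta>B (norm u))
        + (1 - w) * min (\<eta>A (norm u)) (\<eta>B (norm u))" by (simp add: algebra_simps)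
    also have "\<dots> \<le> w * A u + (1 - w) * B u"
      using assms(3,4) A(2)[of u] B(2)[of u]
      by (intro add_mono mult_left_mono) auto
    finally show ?thesis .
  qed
  ultimately show ?thesis unfolding coercive_def by blast
qed

lemma coercive_continuous_attains_min:
  fixes f :: "'u::euclidean_space \<Rightarrow> real"
  assumes "continuous_on UNIV f" "coercive f"
  shows "\<exists>u0. \<forall>u. f u0 \<le> f u"
proof -
  define S where "S = {u. f u \<le> f 0}"
  have "compact S" unfolding S_def compact_eq_bounded_closed
    using assms closed_Collect_le[OF assms(1) continuous_on_const] coercive_bounded_sublevel
    by blast
  moreover have "0 \<in> S" unfolding S_def by simp
  ultimately obtain u0 where "u0 \<in> S" "\<forall>u\<in>S. f u0 \<le> f u"
    using continuous_attains_inf[of S f] assms(1) continuous_on_subset by blast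
  then show ?thesis unfolding S_def by (metis mem_Collect_eq nle_le order_trans)
qed

lemma continuous_on_Max_image:
  fixes f :: "'u::topological_space \<Rightarrow> 'i \<Rightarrow> 'b::linorder_topology"
  assumes "\<And>i. i \<in> A \<Longrightarrow> continuous_on S (\<lambda>u. f u i)" "finite A" "A \<noteq> {}"
  shows "continuous_on S (\<lambda>u. Max (f u ` A))"
  using assms(2,3,1)
proof (induction A rule: finite_ne_induct)
  case (singleton i) then show ?case by simp
next
  case (insert i A)
  then have "continuous_on S (\<lambda>u. f u i)" "continuous_on S (\<lambda>u. Max (f u ` A))" by auto
  with insert show ?case by (simp add: continuous_on_max)
qed

lemma convex_upper_image:
  fixes h :: "'u::real_vector \<Rightarrow> 'a::finite \<Rightarrow> real"
  assumes "\<And>i. convex_on UNIV (\<lambda>u. h u i)"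
  shows "convex {z::real^'a. \<exists>u. \<forall>i. h u i \<le> z$i}"
  unfolding convex_alt
proof (clarsimp)
  fix z1 z2 u1 u2 and t :: real
  assume z: "\<forall>i. h u1 i \<le> z1 $ i" "\<forall>i. h u2 i \<le> z2 $ i" and t: "0 \<le> t" "t \<le> 1"
  show "\<exists>u. \<forall>i. h u i \<le> (1 - t) * z1 $ i + t * z2 $ i"
  proof (intro exI allI)
    fix i
    have "h ((1 - t) *\<^sub>R u1 + t *\<^sub>R u2) i \<le> (1 - t) * h u1 i + t * h u2 i"
      using convex_onD[OF assms[of i], of t u1 u2] t by simp
    also have "\<dots> \<le> (1 - t) * z1 $ i + t * z2 $ i"
      using z t by (intro add_mono mult_left_mono) auto
    finally show "h ((1 - t) *\<^sub>R u1 + t *\<^sub>R u2) i \<le> (1 - t) * z1 $ i + t * z2 $ i" .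
  qed
qed

lemma convex_open_lower_orthant: "convex {w::real^'a. \<forall>i. w$i < v}"
proof -
  have "{w::real^'a. \<forall>i. w$i < v} = (\<Inter>i. {w. inner (axis i 1) w < v})"
    by (auto simp: inner_commute inner_axis)
  then show ?thesis by (simp add: convex_INT convex_halfspace_lt)
qed

lemma nonneg_if_bounded_below_on_ray:
  fixes b c d :: real
  assumes "\<And>t. 0 \<le> t \<Longrightarrow> b \<le> c + t * d"
  shows "0 \<le> d"
proof (rule ccontr)
  assume "\<not> 0 \<le> d"
  then have "c + ((\<bar>c - b\<bar> + 1) / - d) * d = c - \<bar>c - b\<bar> - 1" by (simp add: field_simps)
  moreover have "0 \<le> (\<bar>c - b\<bar> + 1) / - d" using \<open>\<not> 0 \<le> d\<close> by (intro divide_nonneg_pos) auto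
  ultimately show False using assms by fastforce
qed

lemma convex_family_mixture_lower_bound:
  fixes h :: "'u::real_vector \<Rightarrow> 'a::finite \<Rightarrow> real"
  assumes conv: "\<And>i. convex_on UNIV (\<lambda>u. h u i)"
    and above: "\<And>u. \<exists>i. v \<le> h u i"
  shows "\<exists>p\<in>prob_simplex. \<forall>u. v \<le> expected p (h u)"
proof -
  define C where "C = {z::real^'a. \<exists>u. \<forall>i. h u i \<le> z$i}"
  define D where "D = {w::real^'a. \<forall>i. w$i < v}"
  have hC: "(\<chi> i. h u i) \<in> C" for u unfolding C_def by auto
  have cD: "(\<chi> i. c) \<in> D" if "c < v" for c unfolding D_def using that by simp
  have "D \<inter> C = {}"
  proof (rule ccontr)
    assume "D \<inter> C \<noteq> {}"
    then obtain z u where "\<And>i. h u i \<le> z$i" "\<And>i. z$i < v" unfolding C_def D_def by auto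
    with above[of u] show False by (meson leD order_trans)
  qed
  moreover have "convex C" unfolding C_def by (rule convex_upper_image[OF conv])
  moreover have "convex D" unfolding D_def by (rule convex_open_lower_orthant)
  moreover have "D \<noteq> {}" "C \<noteq> {}" using cD[of "v - 1"] hC by auto
  ultimately obtain a b where ab: "a \<noteq> 0" "\<And>w. w \<in> D \<Longrightarrow> inner a w \<le> b"
      "\<And>z. z \<in> C \<Longrightarrow> b \<le> inner a z"
    using separating_hyperplane_sets[of D C] by blast
  have inner_sum: "inner a z = (\<Sum>i\<in>UNIV. a$i * z$i)" for z :: "real^'a"
    by (simp add: inner_vec_def)
  have a_nonneg: "a$k \<ge> 0" for k
  proof (rule nonneg_if_bounded_below_on_ray)
    fix t :: real assume "0 \<le> t"
    then have "(\<chi> i. h 0 i) + t *\<^sub>R axis k 1 \<in> C"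
      unfolding C_def by (auto simp: axis_def intro!: exI[of _ 0])
    then have "b \<le> inner a ((\<chi> i. h 0 i) + t *\<^sub>R axis k 1)" by (rule ab(3))
    then show "b \<le> inner a (\<chi> i. h 0 i) + t * a$k"
      by (simp add: inner_add_right inner_axis mult.commute)
  qed
  define Sa where "Sa = (\<Sum>i\<in>UNIV. a$i)"
  obtain k where "a$k \<noteq> 0" using ab(1) by (metis vec_eq_iff zero_index)
  moreover have "a$k \<le> Sa" unfolding Sa_def by (rule member_le_sum) (auto intro: a_nonneg)
  ultimately have Sa_pos: "Sa > 0" using a_nonneg[of k] by linarith
  define p where "p j = a$j / Sa" for j
  have "p \<in> prob_simplex" unfolding prob_simplex_def p_def
    using Sa_pos a_nonneg by (auto simp: sum_divide_distrib[symmetric] Sa_def)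
  moreover have "v \<le> expected p (h u)" for u
  proof -
    have "c \<le> b / Sa" if "c < v" for c
    proof -
      have "c * Sa = inner a (\<chi> i. c)" unfolding inner_sum Sa_def
        by (simp add: sum_distrib_left mult.commute)
      then show ?thesis using ab(2)[OF cD[OF that]] Sa_pos by (simp add: field_simps)
    qed
    then have "v \<le> b / Sa" by (rule dense_le)
    also have "\<dots> \<le> inner a (\<chi> i. h u i) / Sa"
      using ab(3)[OF hC] Sa_pos by (simp add: divide_right_mono)
    also have "\<dots> = expected p (h u)"
      unfolding expected_def p_def inner_sum by (simp add: sum_divide_distrib)
    finally show ?thesis .
  qed
  ultimately show ?thesis by blast
qed

lemma saddle_point_exists:
  fixes h :: "'u::euclidean_space \<Rightarrow> 'a::finite \<Rightarrow> real"
  assumes cont: "\<And>i. continuous_on UNIV (\<lambda>u. h u i)"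
    and conv: "\<And>i. convex_on UNIV (\<lambda>u. h u i)"
    and coer: "coercive (\<lambda>u. h u i)"
  shows "\<exists>us ps. saddle_point h us ps"
proof -
  define \<phi> where "\<phi> u = Max (range (h u))" for u
  have h_le_\<phi>: "h u j \<le> \<phi> u" for u j unfolding \<phi>_def by (rule Max_ge) auto
  have \<phi>_attained: "\<exists>j. h u j = \<phi> u" for u
    unfolding \<phi>_def by (metis Max_in UNIV_not_empty finite finite_imageI image_iff image_is_empty)
  have "continuous_on UNIV \<phi>" unfolding \<phi>_def by (rule continuous_on_Max_image) (use cont in auto)
  moreover have "coercive \<phi>" using coercive_mono[OF coer h_le_\<phi>] .
  ultimately obtain us where us_min: "\<And>u. \<phi> us \<le> \<phi> u"
    using coercive_continuous_attains_min by blast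
  have "\<exists>j. \<phi> us \<le> h u j" for u using \<phi>_attained[of u] us_min[of u] by metis
  then obtain ps where ps: "ps \<in> prob_simplex" "\<And>u. \<phi> us \<le> expected ps (h u)"
    using convex_family_mixture_lower_bound[of h, OF conv] by blast
  have "expected p (h us) \<le> \<phi> us" if "p \<in> prob_simplex" for p
    using expected_le_const[OF that h_le_\<phi>] .
  then have "saddle_point h us ps"
    unfolding saddle_point_def using ps by (meson order_trans)
  then show ?thesis by blast
qed

lemma lower_value_le_upper_value: "lower_value h U \<le> upper_value h U"
  unfolding upper_value_def lower_value_def
  by (intro SUP_least INF_greatest) (meson INF_lower SUP_upper order_trans)

lemma saddle_point_values:
  fixes h :: "'u \<Rightarrow> 'a::finite \<Rightarrow> real"
  assumes sp: "saddle_point h us ps" and "us \<in> U"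
  shows "upper_value h U = ereal (expected ps (h us))"
    and "lower_value h U = ereal (expected ps (h us))"
proof -
  define V where "V = expected ps (h us)"
  have ps: "ps \<in> prob_simplex" and sp_max: "\<And>p. p \<in> prob_simplex \<Longrightarrow> expected p (h us) \<le> V"
    and sp_min: "\<And>u. V \<le> expected ps (h u)"
    using sp unfolding saddle_point_def V_def by auto
  have "upper_value h U \<le> V"
  proof -
    have "upper_value h U \<le> (SUP p\<in>prob_simplex. ereal (expected p (h us)))"
      unfolding upper_value_def using \<open>us \<in> U\<close> by (rule INF_lower)
    also have "\<dots> \<le> V" using sp_max by (intro SUP_least) auto
    finally show ?thesis .
  qed
  moreover have "V \<le> lower_value h U"
  proof -
    have "ereal V \<le> (INF u\<in>U. ereal (expected ps (h u)))"
      using sp_min by (intro INF_greatest) auto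
    also have "\<dots> \<le> lower_value h U" unfolding lower_value_def using ps by (rule SUP_upper)
    finally show ?thesis .
  qed
  ultimately show "upper_value h U = V" "lower_value h U = V"
    using lower_value_le_upper_value[of h U] by (meson antisym order_trans)+
qed

lemma saddle_point_le_sum_abs:
  fixes h :: "'u::zero \<Rightarrow> 'a::finite \<Rightarrow> real"
  assumes sp: "saddle_point h us ps"
  shows "h us i \<le> (\<Sum>j\<in>UNIV. \<bar>h 0 j\<bar>)"
proof -
  have ps: "ps \<in> prob_simplex" using sp unfolding saddle_point_def by auto
  have "h us i = expected (\<lambda>j. if j = i then 1 else 0) (h us)" by (simp add: expected_point_mass)
  also have "\<dots> \<le> expected ps (h us)"
    using sp point_mass_in_prob_simplex unfolding saddle_point_def by blast
  also have "\<dots> \<le> expected ps (h 0)" using sp unfolding saddle_point_def by blast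
  also have "\<dots> \<le> (\<Sum>j\<in>UNIV. \<bar>h 0 j\<bar>)"
    by (rule expected_le_const[OF ps]) (meson abs_ge_self member_le_sum order_trans finite UNIV_I abs_ge_zero)
  finally show ?thesis .
qed

lemma bounded_saddle_points:
  fixes h :: "'u::real_normed_vector \<Rightarrow> 'a::finite \<Rightarrow> real"
  assumes "coercive (\<lambda>u. h u i)"
  shows "bounded {us. \<exists>ps. saddle_point h us ps}"
  using coercive_bounded_sublevel[OF assms, of "\<Sum>j\<in>UNIV. \<bar>h 0 j\<bar>"]
  by (rule bounded_subset) (auto dest: saddle_point_le_sum_abs)

lemma saddle_points_in_compact:
  fixes h :: "'s::finite \<Rightarrow> 'u::euclidean_space \<Rightarrow> 'a::finite \<Rightarrow> real"
  assumes "\<And>s. \<exists>i. coercive (\<lambda>u. h s u i)"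
  shows "\<exists>U. compact U \<and> (\<forall>s us ps. saddle_point (h s) us ps \<longrightarrow> us \<in> U)"
proof -
  define S where "S s = {us. \<exists>ps. saddle_point (h s) us ps}" for s
  have "bounded (S s)" for s
    unfolding S_def using assms[of s] bounded_saddle_points by blast
  then have "compact (closure (\<Union>s. S s))" by (simp add: bounded_UN)
  moreover have "(\<Union>s. S s) \<subseteq> closure (\<Union>s. S s)" by (rule closure_subset)
  ultimately show ?thesis unfolding S_def by blast
qed

lemma continuous_convex_coercive_convex_combination:
  assumes "continuous_on UNIV A \<and> coercive A \<and> convex_on UNIV A"
    and "continuous_on UNIV B \<and> coercive B \<and> convex_on UNIV B"
    and "0 \<le> w \<and> w \<le> 1"
  shows "continuous_on UNIV (\<lambda>u. w * A u + (1 - w) * B u)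
    \<and> convex_on UNIV (\<lambda>u. w * A u + (1 - w) * B u)
    \<and> coercive (\<lambda>u. w * A u + (1 - w) * B u)"
  using assms
  by (auto intro!: continuous_intros convex_on_add convex_on_cmul coercive_convex_combination)

theorem theorem1:
  fixes F :: "real^'n \<Rightarrow> real^'m \<Rightarrow> real^'n"
    and \<sigma>0 :: "real^'n \<Rightarrow> real^'m \<Rightarrow> real"
    and \<sigma>1 :: "real^'n \<Rightarrow> real"
    and g0 :: "'a::finite \<Rightarrow> 'f::finite \<Rightarrow> real"
    and P :: "'a \<Rightarrow> 'f \<Rightarrow> 'f \<Rightarrow> real"
    and q :: "'f \<Rightarrow> real"
  assumes P_stoch: "\<And>a. row_stochastic (P a)"
    and q_range: "\<And>i. 0 \<le> q i \<and> q i \<le> 1"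
    and hyp0: "\<And>x s a. continuous_on UNIV (\<lambda>u. Payoff \<sigma>0 \<sigma>1 g0 x s (F x 0) u a)
                      \<and> coercive (\<lambda>u. Payoff \<sigma>0 \<sigma>1 g0 x s (F x 0) u a)
                      \<and> convex_on UNIV (\<lambda>u. Payoff \<sigma>0 \<sigma>1 g0 x s (F x 0) u a)"
    and hyp1: "\<And>x s a. continuous_on UNIV (\<lambda>u. Payoff \<sigma>0 \<sigma>1 g0 x s (F x u) u a)
                      \<and> coercive (\<lambda>u. Payoff \<sigma>0 \<sigma>1 g0 x s (F x u) u a)
                      \<and> convex_on UNIV (\<lambda>u. Payoff \<sigma>0 \<sigma>1 g0 x s (F x u) u a)"
  shows "(\<forall>x s. upper_value (hvec F \<sigma>0 \<sigma>1 g0 P q x s) UNIV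
                 = lower_value (hvec F \<sigma>0 \<sigma>1 g0 P q x s) UNIV
             \<and> upper_value (hvec F \<sigma>0 \<sigma>1 g0 P q x s) UNIV \<noteq> \<infinity>
             \<and> upper_value (hvec F \<sigma>0 \<sigma>1 g0 P q x s) UNIV \<noteq> -\<infinity>
             \<and> (\<exists>us ps. saddle_point (hvec F \<sigma>0 \<sigma>1 g0 P q x s) us ps))
       \<and> (\<forall>x. \<exists>U. compact U \<and>
             (\<forall>s. (\<forall>us ps. saddle_point (hvec F \<sigma>0 \<sigma>1 g0 P q x s) us ps \<longrightarrow> us \<in> U)
                  \<and> upper_value (hvec F \<sigma>0 \<sigma>1 g0 P q x s) U
                      = upper_value (hvec F \<sigma>0 \<sigma>1 g0 P q x s) UNIV
                  \<and> lower_value (hvec F \<sigma>0 \<sigma>1 g0 P q x s) U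
                      = lower_value (hvec F \<sigma>0 \<sigma>1 g0 P q x s) UNIV))"
proof -
  let ?h = "hvec F \<sigma>0 \<sigma>1 g0 P q"
  have component: "continuous_on UNIV (\<lambda>u. ?h x s u a) \<and> convex_on UNIV (\<lambda>u. ?h x s u a)
      \<and> coercive (\<lambda>u. ?h x s u a)" for x s a
    unfolding hvec_def
    by (rule continuous_convex_coercive_convex_combination[OF hyp1 hyp0 Pq_bounds[OF P_stoch q_range]])
  have saddle: "\<exists>us ps. saddle_point (?h x s) us ps" for x s
    using saddle_point_exists[of "?h x s"] component by blast
  have part1: "upper_value (?h x s) UNIV = lower_value (?h x s) UNIV
      \<and> upper_value (?h x s) UNIV \<noteq> \<infinity> \<and> upper_value (?h x s) UNIV \<noteq> -\<infinity>
      \<and> (\<exists>us ps. saddle_point (?h x s) us ps)" for x s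
  proof -
    obtain us ps where sp: "saddle_point (?h x s) us ps" using saddle by blast
    show ?thesis using saddle_point_values[OF sp UNIV_I] sp by auto
  qed
  have part2: "\<exists>U. compact U \<and> (\<forall>s. (\<forall>us ps. saddle_point (?h x s) us ps \<longrightarrow> us \<in> U)
      \<and> upper_value (?h x s) U = upper_value (?h x s) UNIV
      \<and> lower_value (?h x s) U = lower_value (?h x s) UNIV)" for x
  proof -
    obtain U where "compact U" and in_U: "\<And>s us ps. saddle_point (?h x s) us ps \<Longrightarrow> us \<in> U"
      using saddle_points_in_compact[of "?h x"] component by blast
    moreover have "upper_value (?h x s) U = upper_value (?h x s) UNIV
        \<and> lower_value (?h x s) U = lower_value (?h x s) UNIV" for s
    proof -
      obtain us ps where sp: "saddle_point (?h x s) us ps" using saddle by blast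
      show ?thesis using saddle_point_values[OF sp UNIV_I] saddle_point_values[OF sp in_U[OF sp]]
        by simp
    qed
    ultimately show ?thesis by blast
  qed
  show ?thesis using part1 part2 by blast
qed

end
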